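(* Let $G=(V,E)$ be an $S$-regular graph on $n$ vertices with cells $V_1,\dots,V_k$, $n_i=|V_i|$, and let $B,C\subseteq V$. Write $B_i=B\cap V_i$, $C_j=C\cap V_j$, $c_i=|C_i|/n_i$ and $b=|B|/n$. Then \[\Bigl|\,|E(B,C)|-\sum_{i=1}^k\sum_{j=1}^k\sqrt{\tfrac{s_{ij}s_{ji}}{n_in_j}}\,|B_i||C_j|\,\Bigr|\le\lambda_B\, n\Bigl(b\sum_{i=1}^k c_i(1-c_i)\Bigr)^{1/2}.\]
   Context: All graphs are simple, undirected and connected. $G$ is $S$-regular ($S=(s_{ij})$ a $k\times k$ nonnegative integer matrix) if $V$ is partitioned into nonempty cells $V_1,\dots,V_k$ such that every vertex of $V_i$ has exactly $s_{ij}$ neighbours in $V_j$. $|E(B,C)|$ denotes the number of pairs $(u,v)\in B\times C$ with $uv\in E$ (i.e. $\mathbf{1}_B^TA\mathbf{1}_C$, $A$ the adjacency matrix). The subspace $W=\mathrm{span}\{\mathbf{1}_{V_1},\dots,\mathbf{1}_{V_k}\}$ is $A$-invariant with eigenvalues on $W$ equal to those of $S$; the eigenvalues of $A$ on $W^\perp$ are the bulk eigenvalues (assume $n>k$), and $\lambda_B$ is the largest absolute value of a bulk eigenvalue. *)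

theory Defs
  imports Complex_Main
begin

definition simple_graph :: "'a set \<Rightarrow> ('a \<Rightarrow> 'a \<Rightarrow> bool) \<Rightarrow> bool" where
  "simple_graph V E \<longleftrightarrow> finite V \<and> (\<forall>u v. E u v \<longrightarrow> u \<in> V \<and> v \<in> V)
     \<and> (\<forall>u v. E u v \<longrightarrow> E v u) \<and> (\<forall>u. \<not> E u u)"

definition connected_graph :: "'a set \<Rightarrow> ('a \<Rightarrow> 'a \<Rightarrow> bool) \<Rightarrow> bool" where
  "connected_graph V E \<longleftrightarrow> (\<forall>u\<in>V. \<forall>v\<in>V. E\<^sup>*\<^sup>* u v)"

definition S_regular :: "'a set \<Rightarrow> ('a \<Rightarrow> 'a \<Rightarrow> bool) \<Rightarrow> nat \<Rightarrow> (nat \<Rightarrow> 'a set)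
    \<Rightarrow> (nat \<Rightarrow> nat \<Rightarrow> nat) \<Rightarrow> bool" where
  "S_regular V E k P S \<longleftrightarrow>
     (\<forall>i<k. P i \<noteq> {} \<and> P i \<subseteq> V) \<and>
     (\<forall>i<k. \<forall>j<k. i \<noteq> j \<longrightarrow> P i \<inter> P j = {}) \<and>
     V = (\<Union>i<k. P i) \<and>
     (\<forall>i<k. \<forall>j<k. \<forall>v\<in>P i. card {u \<in> P j. E v u} = S i j)"

definition adj_apply :: "'a set \<Rightarrow> ('a \<Rightarrow> 'a \<Rightarrow> bool) \<Rightarrow> ('a \<Rightarrow> real) \<Rightarrow> 'a \<Rightarrow> real" where
  "adj_apply V E x v = (\<Sum>u\<in>V. if E v u then x u else 0)"

text \<open>Bulk eigenvalue: eigenvalue of A restricted to W-perp, where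
  W = span of the cell indicator vectors.\<close>

definition bulk_eigenvalue :: "'a set \<Rightarrow> ('a \<Rightarrow> 'a \<Rightarrow> bool) \<Rightarrow> nat \<Rightarrow> (nat \<Rightarrow> 'a set)
    \<Rightarrow> real \<Rightarrow> bool" where
  "bulk_eigenvalue V E k P \<mu> \<longleftrightarrow>
     (\<exists>x :: 'a \<Rightarrow> real. (\<forall>v. v \<notin> V \<longrightarrow> x v = 0) \<and> (\<exists>v\<in>V. x v \<noteq> 0) \<and>
        (\<forall>i<k. (\<Sum>v\<in>P i. x v) = 0) \<and>
        (\<forall>v\<in>V. adj_apply V E x v = \<mu> * x v))"

definition lambda_B :: "'a set \<Rightarrow> ('a \<Rightarrow> 'a \<Rightarrow> bool) \<Rightarrow> nat \<Rightarrow> (nat \<Rightarrow> 'a set) \<Rightarrow> real" where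
  "lambda_B V E k P = Max {\<bar>\<mu>\<bar> | \<mu>. bulk_eigenvalue V E k P \<mu>}"

definition edge_count :: "('a \<Rightarrow> 'a \<Rightarrow> bool) \<Rightarrow> 'a set \<Rightarrow> 'a set \<Rightarrow> nat" where
  "edge_count E B C = card {(u, v). u \<in> B \<and> v \<in> C \<and> E u v}"

end

theory Submission
  imports Defs "HOL-Analysis.Analysis"
begin

text \<open>
  Write the indicator of \<open>B\<close> as \<open>a\<^sub>B + p\<^sub>B\<close>, where \<open>a\<^sub>B\<close> is constant on each cell
  (its value on \<open>V\<^sub>i\<close> is the density \<open>b\<^sub>i = |B\<^sub>i| / n\<^sub>i\<close>) and \<open>p\<^sub>B\<close> lies in the bulk space
  \<open>W\<^sup>\<bottom>\<close>, and likewise for \<open>C\<close>. Both \<open>W\<close> and \<open>W\<^sup>\<bottom>\<close> are invariant under the symmetric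
  adjacency matrix \<open>A\<close>, so \<open>|E(B,C)| = a\<^sub>B\<^sup>T A a\<^sub>C + p\<^sub>B\<^sup>T A p\<^sub>C\<close>; the first term is the
  double sum of the theorem because double counting gives \<open>n\<^sub>i s\<^sub>i\<^sub>j = n\<^sub>j s\<^sub>j\<^sub>i\<close>.

  The error term is controlled variationally: a maximiser of \<open>|x\<^sup>T A x|\<close> on the unit sphere
  of \<open>W\<^sup>\<bottom>\<close> (which is compact) is a bulk eigenvector, so \<open>|x\<^sup>T A x| \<le> \<lambda>\<^sub>B |x|\<^sup>2\<close> on \<open>W\<^sup>\<bottom>\<close>,
  and polarization turns this into \<open>|x\<^sup>T A y| \<le> \<lambda>\<^sub>B |x| |y|\<close>. Finally
  \<open>|p\<^sub>B|\<^sup>2 = \<Sum>\<^sub>i n\<^sub>i b\<^sub>i (1 - b\<^sub>i) \<le> |B|\<close> and \<open>|p\<^sub>C|\<^sup>2 = \<Sum>\<^sub>i n\<^sub>i c\<^sub>i (1 - c\<^sub>i) \<le> n \<Sum>\<^sub>i c\<^sub>i (1 - c\<^sub>i)\<close>.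
\<close>

definition inner_on :: "'a set \<Rightarrow> ('a \<Rightarrow> real) \<Rightarrow> ('a \<Rightarrow> real) \<Rightarrow> real" where
  "inner_on V x y = (\<Sum>v\<in>V. x v * y v)"

lemma inner_on_commute: "inner_on V x y = inner_on V y x"
  by (simp add: inner_on_def mult.commute)

lemma inner_on_add_left [simp]: "inner_on V (\<lambda>v. x v + y v) z = inner_on V x z + inner_on V y z"
  by (simp add: inner_on_def algebra_simps sum.distrib)

lemma inner_on_diff_left [simp]: "inner_on V (\<lambda>v. x v - y v) z = inner_on V x z - inner_on V y z"
  by (simp add: inner_on_def algebra_simps sum_subtractf)

lemma inner_on_scale_left [simp]: "inner_on V (\<lambda>v. c * x v) z = c * inner_on V x z"
  by (simp add: inner_on_def algebra_simps sum_distrib_left)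

lemma inner_on_add_right [simp]: "inner_on V z (\<lambda>v. x v + y v) = inner_on V z x + inner_on V z y"
  by (simp add: inner_on_def algebra_simps sum.distrib)

lemma inner_on_diff_right [simp]: "inner_on V z (\<lambda>v. x v - y v) = inner_on V z x - inner_on V z y"
  by (simp add: inner_on_def algebra_simps sum_subtractf)

lemma inner_on_scale_right [simp]: "inner_on V z (\<lambda>v. c * x v) = c * inner_on V z x"
  by (simp add: inner_on_def algebra_simps sum_distrib_left)

lemma inner_on_sum_right:
  "inner_on V z (\<lambda>v. \<Sum>i\<in>F. c i * x i v) = (\<Sum>i\<in>F. c i * inner_on V z (x i))"
  by (simp add: inner_on_def sum_distrib_left algebra_simps sum.swap[of _ V])

lemma inner_on_self_nonneg: "inner_on V x x \<ge> 0"
  by (simp add: inner_on_def sum_nonneg)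

lemma inner_on_self_eq_0:
  assumes "finite V" "inner_on V x x = 0" "v \<in> V"
  shows "x v = 0"
  using assms sum_nonneg_eq_0_iff[of V "\<lambda>v. x v * x v"] by (simp add: inner_on_def)

lemma inner_on_divide_left [simp]: "inner_on V (\<lambda>v. x v / c) z = inner_on V x z / c"
  by (simp add: inner_on_def sum_divide_distrib)

lemma inner_on_divide_right [simp]: "inner_on V z (\<lambda>v. x v / c) = inner_on V z x / c"
  by (simp add: inner_on_def sum_divide_distrib)

lemma inner_on_self_normalize:
  assumes "inner_on V x x \<noteq> 0"
  shows "inner_on V (\<lambda>v. x v / sqrt (inner_on V x x)) (\<lambda>v. x v / sqrt (inner_on V x x)) = 1"
  using assms inner_on_self_nonneg[of V x] by (simp add: divide_divide_eq_left)

lemma sum_square_le_1_if_orthonormal: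
  assumes "finite V" "finite F" "w \<in> V"
    and orthonormal: "\<And>\<mu> \<nu>. \<mu> \<in> F \<Longrightarrow> \<nu> \<in> F \<Longrightarrow> inner_on V (e \<mu>) (e \<nu>) = of_bool (\<mu> = \<nu>)"
  shows "(\<Sum>\<mu>\<in>F. e \<mu> w * e \<mu> w) \<le> 1"
proof -
  define s where "s = (\<Sum>\<mu>\<in>F. e \<mu> w * e \<mu> w)"
  define g where "g = (\<lambda>v. \<Sum>\<mu>\<in>F. e \<mu> w * e \<mu> v)"
  define d where "d = (\<lambda>v. of_bool (v = w) :: real)"
  have e_g: "inner_on V (e \<nu>) g = e \<nu> w" if "\<nu> \<in> F" for \<nu>
    using assms(2) that by (simp add: g_def inner_on_sum_right orthonormal if_distrib cong: sum.cong)
  have "inner_on V g g = s"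
    unfolding s_def by (subst (2) g_def) (simp add: inner_on_sum_right inner_on_commute[of V g] e_g)
  moreover have "inner_on V d g = s" "inner_on V d d = 1"
    using assms(1,3) by (simp_all add: inner_on_def d_def g_def s_def of_bool_def
        if_distrib[of "\<lambda>a. a * _"] cong: if_cong)
  moreover have "0 \<le> inner_on V (\<lambda>v. d v - g v) (\<lambda>v. d v - g v)"
    by (rule inner_on_self_nonneg)
  ultimately show ?thesis
    by (simp add: inner_on_commute[of V g d] s_def)
qed

lemma card_le_card_if_orthonormal:
  assumes "finite V"
    and orthonormal: "\<And>\<mu> \<nu>. \<mu> \<in> F \<Longrightarrow> \<nu> \<in> F \<Longrightarrow> inner_on V (e \<mu>) (e \<nu>) = of_bool (\<mu> = \<nu>)"
  shows "card F \<le> card V"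
proof (cases "finite F")
  case True
  have "real (card F) = (\<Sum>\<mu>\<in>F. inner_on V (e \<mu>) (e \<mu>))"
    by (simp add: orthonormal)
  also have "\<dots> = (\<Sum>w\<in>V. \<Sum>\<mu>\<in>F. e \<mu> w * e \<mu> w)"
    unfolding inner_on_def by (rule sum.swap)
  also have "\<dots> \<le> (\<Sum>w\<in>V. 1)"
    using sum_square_le_1_if_orthonormal[OF assms(1) True _ orthonormal] by (intro sum_mono)
  finally show ?thesis by simp
qed simp

lemma linear_coeff_eq_0_if_nonpos:
  fixes a c :: real
  assumes "\<And>t. a * t + c * t\<^sup>2 \<le> 0"
  shows "a = 0"
proof (rule ccontr)
  assume "a \<noteq> 0"
  define d where "d = \<bar>c\<bar> + 1"
  have "d > 0" "d + c > 0" by (auto simp: d_def)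
  have "a * (a / d) + c * (a / d)\<^sup>2 = a\<^sup>2 * (d + c) / d\<^sup>2"
    using \<open>d > 0\<close> by (simp add: field_simps power2_eq_square)
  also have "\<dots> > 0"
    using \<open>a \<noteq> 0\<close> \<open>d > 0\<close> \<open>d + c > 0\<close> by simp
  finally show False using assms[of "a / d"] by simp
qed

section \<open>Equitable partitions\<close>

locale S_regular_graph =
  fixes V :: "'a set" and E :: "'a \<Rightarrow> 'a \<Rightarrow> bool" and k :: nat
    and P :: "nat \<Rightarrow> 'a set" and S :: "nat \<Rightarrow> nat \<Rightarrow> nat"
  assumes simple: "simple_graph V E" and regular: "S_regular V E k P S"
begin

lemma finite_V: "finite V"
  using simple by (simp add: simple_graph_def)

lemma edge_sym: "E u v \<Longrightarrow> E v u"
  using simple by (simp add: simple_graph_def)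

lemma edge_in_V: "E u v \<Longrightarrow> v \<in> V"
  using simple by (simp add: simple_graph_def)

lemma cell_nonempty: "i < k \<Longrightarrow> P i \<noteq> {}"
  using regular by (simp add: S_regular_def)

lemma cell_subset: "i < k \<Longrightarrow> P i \<subseteq> V"
  using regular unfolding S_regular_def by blast

lemma cells_disjoint: "i < k \<Longrightarrow> j < k \<Longrightarrow> v \<in> P i \<Longrightarrow> v \<in> P j \<Longrightarrow> i = j"
  using regular unfolding S_regular_def by blast

lemma V_eq_UN_cells: "V = (\<Union>i<k. P i)"
  using regular by (simp add: S_regular_def)

lemma card_neighbours_in_cell: "i < k \<Longrightarrow> j < k \<Longrightarrow> v \<in> P i \<Longrightarrow> card {u \<in> P j. E v u} = S i j"
  using regular by (simp add: S_regular_def)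

lemma finite_cell: "i < k \<Longrightarrow> finite (P i)"
  using cell_subset finite_V finite_subset by blast

lemma card_cell_pos: "i < k \<Longrightarrow> card (P i) > 0"
  using finite_cell cell_nonempty by (simp add: card_gt_0_iff)

lemma sum_over_cells: "(\<Sum>v\<in>V. f v) = (\<Sum>i<k. \<Sum>v\<in>P i. f v)"
  unfolding V_eq_UN_cells by (rule sum.UNION_disjoint) (auto simp: finite_cell dest: cells_disjoint)

lemma sum_indicator_cell: "i < k \<Longrightarrow> (\<Sum>v\<in>P i. indicator A v) = real (card (A \<inter> P i))"
  using finite_cell by (simp add: indicator_def Int_def conj_commute)

lemma sum_adj_apply_cell:
  assumes "i < k"
  shows "(\<Sum>u\<in>P i. adj_apply V E y u) = (\<Sum>j<k. real (S j i) * (\<Sum>v\<in>P j. y v))"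
proof -
  have "(\<Sum>u\<in>P i. adj_apply V E y u) = (\<Sum>v\<in>V. \<Sum>u\<in>P i. if E u v then y v else 0)"
    unfolding adj_apply_def by (rule sum.swap)
  also have "\<dots> = (\<Sum>v\<in>V. y v * real (card {u \<in> P i. E v u}))"
  proof (rule sum.cong)
    fix v
    have "{u \<in> P i. E u v} = {u \<in> P i. E v u}" by (auto dest: edge_sym)
    then show "(\<Sum>u\<in>P i. if E u v then y v else 0) = y v * real (card {u \<in> P i. E v u})"
      using finite_cell[OF assms] by (simp add: sum.If_cases Int_def mult.commute)
  qed simp
  also have "\<dots> = (\<Sum>j<k. real (S j i) * (\<Sum>v\<in>P j. y v))"
    by (subst sum_over_cells)
      (intro sum.cong refl, simp add: card_neighbours_in_cell assms sum_distrib_left mult.commute[of "real _"])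
  finally show ?thesis .
qed

section \<open>The adjacency form on the bulk space\<close>

text \<open>\<open>bulk_space\<close> is \<open>W\<^sup>\<bottom>\<close>, with vectors represented as functions vanishing outside \<open>V\<close>.\<close>

definition bulk_space :: "('a \<Rightarrow> real) set" where
  "bulk_space = {x. (\<forall>v. v \<notin> V \<longrightarrow> x v = 0) \<and> (\<forall>i<k. (\<Sum>v\<in>P i. x v) = 0)}"

definition adj_form :: "('a \<Rightarrow> real) \<Rightarrow> ('a \<Rightarrow> real) \<Rightarrow> real" where
  "adj_form x y = inner_on V x (adj_apply V E y)"

lemma bulk_eigenvalue_iff:
  "bulk_eigenvalue V E k P \<mu> \<longleftrightarrow>
     (\<exists>x\<in>bulk_space. (\<exists>v\<in>V. x v \<noteq> 0) \<and> (\<forall>v\<in>V. adj_apply V E x v = \<mu> * x v))"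
  unfolding bulk_eigenvalue_def bulk_space_def by blast

lemma bulk_space_add: "x \<in> bulk_space \<Longrightarrow> y \<in> bulk_space \<Longrightarrow> (\<lambda>v. x v + y v) \<in> bulk_space"
  by (simp add: bulk_space_def sum.distrib)

lemma bulk_space_diff: "x \<in> bulk_space \<Longrightarrow> y \<in> bulk_space \<Longrightarrow> (\<lambda>v. x v - y v) \<in> bulk_space"
  by (simp add: bulk_space_def sum_subtractf)

lemma bulk_space_scale: "x \<in> bulk_space \<Longrightarrow> (\<lambda>v. c * x v) \<in> bulk_space"
  by (simp add: bulk_space_def sum_distrib_left[symmetric])

lemma bulk_space_divide: "x \<in> bulk_space \<Longrightarrow> (\<lambda>v. x v / c) \<in> bulk_space"
  by (simp add: bulk_space_def sum_divide_distrib[symmetric])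

lemma adj_form_commute: "adj_form x y = adj_form y x"
proof -
  have "adj_form x y = (\<Sum>u\<in>V. \<Sum>v\<in>V. if E u v then x u * y v else 0)"
    unfolding adj_form_def inner_on_def adj_apply_def
    by (auto simp: sum_distrib_left intro!: sum.cong)
  also have "\<dots> = (\<Sum>v\<in>V. \<Sum>u\<in>V. if E v u then y v * x u else 0)"
    by (subst sum.swap) (auto intro!: sum.cong dest: edge_sym simp: mult.commute)
  also have "\<dots> = adj_form y x"
    unfolding adj_form_def inner_on_def adj_apply_def
    by (auto simp: sum_distrib_left intro!: sum.cong)
  finally show ?thesis .
qed

lemma adj_form_add_left [simp]: "adj_form (\<lambda>v. x v + y v) z = adj_form x z + adj_form y z"
  and adj_form_diff_left [simp]: "adj_form (\<lambda>v. x v - y v) z = adj_form x z - adj_form y z"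
  and adj_form_scale_left [simp]: "adj_form (\<lambda>v. c * x v) z = c * adj_form x z"
  and adj_form_divide_left [simp]: "adj_form (\<lambda>v. x v / c) z = adj_form x z / c"
  by (simp_all add: adj_form_def)

lemma adj_form_add_right [simp]: "adj_form z (\<lambda>v. x v + y v) = adj_form z x + adj_form z y"
  and adj_form_diff_right [simp]: "adj_form z (\<lambda>v. x v - y v) = adj_form z x - adj_form z y"
  and adj_form_scale_right [simp]: "adj_form z (\<lambda>v. c * x v) = c * adj_form z x"
  and adj_form_divide_right [simp]: "adj_form z (\<lambda>v. x v / c) = adj_form z x / c"
  by (simp_all add: adj_form_commute[of z])

lemma adj_form_eq_0_if_inner_on_self_eq_0:
  assumes "inner_on V x x = 0"
  shows "adj_form x y = 0"
  using inner_on_self_eq_0[OF finite_V assms] by (simp add: adj_form_def inner_on_def)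

lemma adj_apply_in_bulk_space:
  assumes "x \<in> bulk_space"
  shows "(\<lambda>v. if v \<in> V then adj_apply V E x v else 0) \<in> bulk_space"
proof -
  have "(\<Sum>v\<in>P i. if v \<in> V then adj_apply V E x v else 0) = (\<Sum>v\<in>P i. adj_apply V E x v)"
    if "i < k" for i
    using cell_subset[OF that] by (intro sum.cong) auto
  then show ?thesis
    using assms by (simp add: bulk_space_def sum_adj_apply_cell)
qed

lemma inner_on_adj_apply:
  "inner_on V z (\<lambda>v. if v \<in> V then adj_apply V E x v else 0) = adj_form z x"
  by (simp add: adj_form_def inner_on_def)

section \<open>The bulk eigenvalues bound the adjacency form\<close>

lemma bulk_space_has_unit_vector:
  assumes "card V > k"
  obtains x where "x \<in> bulk_space" "inner_on V x x = 1"
proof -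
  have "\<exists>i<k. card (P i) \<ge> 2"
  proof (rule ccontr)
    assume "\<not> ?thesis"
    then have "card V \<le> (\<Sum>i<k. 1)"
      unfolding V_eq_UN_cells by (intro card_UN_le[THEN order_trans] sum_mono) auto
    then show False using assms by simp
  qed
  then obtain i a b where i: "i < k" and ab: "a \<in> P i" "b \<in> P i" "a \<noteq> b"
    by (metis One_nat_def card_le_Suc0_iff_eq not_less_eq_eq numeral_2_eq_2 finite_cell)
  define y where "y = (\<lambda>v. (if v = a then 1 else 0) - (if v = b then 1 else 0) :: real)"
  have "y \<in> bulk_space"
  proof -
    have "a \<in> P j \<longleftrightarrow> b \<in> P j" if "j < k" for j
      using cells_disjoint[OF i that] ab by blast
    then show ?thesis
      using ab cell_subset[OF i] finite_cell
      by (auto simp: bulk_space_def y_def sum_subtractf Int_def)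
  qed
  moreover have "y a * y a \<le> inner_on V y y"
    unfolding inner_on_def using ab cell_subset[OF i] finite_V by (intro member_le_sum) auto
  then have "inner_on V y y \<noteq> 0"
    using ab by (simp add: y_def)
  ultimately show ?thesis
    using that bulk_space_divide inner_on_self_normalize by blast
qed

lemma compact_bulk_unit_sphere: "compact {x \<in> bulk_space. inner_on V x x = 1}"
proof -
  define K where "K = PiE UNIV (\<lambda>v. if v \<in> V then {-1..1::real} else {0})"
  have "compactin (product_topology (\<lambda>_. euclidean) UNIV) K"
    unfolding K_def by (subst compactin_PiE) auto
  then have "compact K"
    by (simp add: euclidean_product_topology)
  moreover have "closed {x \<in> bulk_space. inner_on V x x = 1}"
  proof -
    have "{x \<in> bulk_space. inner_on V x x = 1} =
        (\<Inter>v\<in>-V. {x. x v = 0}) \<inter> (\<Inter>i<k. {x. (\<Sum>v\<in>P i. x v) = 0}) \<inter> {x. inner_on V x x = 1}"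
      by (auto simp: bulk_space_def)
    also have "closed \<dots>"
      unfolding inner_on_def
      by (intro closed_Int closed_INT ballI closed_Collect_eq continuous_on_sum continuous_on_mult
          continuous_on_product_coordinates continuous_on_const)
    finally show ?thesis .
  qed
  moreover have "{x \<in> bulk_space. inner_on V x x = 1} \<subseteq> K"
  proof
    fix x assume x: "x \<in> {x \<in> bulk_space. inner_on V x x = 1}"
    have "\<bar>x v\<bar> \<le> 1" if "v \<in> V" for v
    proof -
      have "x v * x v \<le> inner_on V x x"
        unfolding inner_on_def using that finite_V by (intro member_le_sum) auto
      then show ?thesis
        using x abs_square_le_1[of "x v"] by (simp add: power2_eq_square)
    qed
    then show "x \<in> K"
      using x by (auto simp: K_def bulk_space_def PiE_iff abs_le_iff)
  qed
  ultimately show ?thesis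
    by (metis compact_Int_closed Int_absorb1)
qed

lemma continuous_on_adj_form_self: "continuous_on UNIV (\<lambda>x. adj_form x x)"
proof -
  have "continuous_on UNIV (\<lambda>x. if E u v then x v else 0)" for u v
    by (cases "E u v") auto
  then show ?thesis
    unfolding adj_form_def inner_on_def adj_apply_def
    by (intro continuous_on_sum continuous_on_mult continuous_on_product_coordinates)
qed

lemma abs_adj_form_le_if_max_on_unit_sphere:
  assumes max: "\<And>y. y \<in> bulk_space \<Longrightarrow> inner_on V y y = 1 \<Longrightarrow> \<bar>adj_form y y\<bar> \<le> m"
    and x: "x \<in> bulk_space"
  shows "\<bar>adj_form x x\<bar> \<le> m * inner_on V x x"
proof (cases "inner_on V x x = 0")
  case True
  then show ?thesis by (simp add: adj_form_eq_0_if_inner_on_self_eq_0)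
next
  case False
  define r where "r = inner_on V x x"
  have "r > 0"
    using False inner_on_self_nonneg[of V x] by (simp add: r_def)
  have "\<bar>adj_form x x\<bar> / r \<le> m"
    using max[OF bulk_space_divide[OF x] inner_on_self_normalize[OF False]] \<open>r > 0\<close>
    by (simp add: r_def divide_divide_eq_left abs_divide)
  then show ?thesis
    using \<open>r > 0\<close> by (simp add: r_def divide_le_eq)
qed

lemma exists_max_abs_rayleigh:
  assumes "card V > k"
  obtains x0 where "x0 \<in> bulk_space" "inner_on V x0 x0 = 1"
    "\<And>x. x \<in> bulk_space \<Longrightarrow> \<bar>adj_form x x\<bar> \<le> \<bar>adj_form x0 x0\<bar> * inner_on V x x"
proof -
  let ?K = "{x \<in> bulk_space. inner_on V x x = 1}"
  have "?K \<noteq> {}"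
    using bulk_space_has_unit_vector[OF assms] by blast
  moreover have "continuous_on ?K (\<lambda>x. \<bar>adj_form x x\<bar>)"
    by (intro continuous_on_rabs continuous_on_subset[OF continuous_on_adj_form_self]) simp
  ultimately obtain x0 where "x0 \<in> ?K" "\<And>y. y \<in> ?K \<Longrightarrow> \<bar>adj_form y y\<bar> \<le> \<bar>adj_form x0 x0\<bar>"
    using continuous_attains_sup[OF compact_bulk_unit_sphere] by blast
  then show ?thesis
    using that abs_adj_form_le_if_max_on_unit_sphere by blast
qed

lemma bulk_eigenvalue_if_max_abs_rayleigh:
  assumes x0: "x0 \<in> bulk_space" "inner_on V x0 x0 = 1"
    and max: "\<And>x. x \<in> bulk_space \<Longrightarrow> \<bar>adj_form x x\<bar> \<le> \<bar>adj_form x0 x0\<bar> * inner_on V x x"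
  shows "bulk_eigenvalue V E k P (adj_form x0 x0)"
proof -
  define \<mu> where "\<mu> = adj_form x0 x0"
  \<comment> \<open>\<open>x0\<close> maximises \<open>\<sigma> x\<^sup>T A x\<close> on the unit sphere, so its first variation vanishes.\<close>
  define \<sigma> where "\<sigma> = (if \<mu> \<ge> 0 then 1 else -1 :: real)"
  have stationary: "adj_form z x0 = \<mu> * inner_on V z x0" if z: "z \<in> bulk_space" for z
  proof -
    have "\<sigma> * 2 * (adj_form z x0 - \<mu> * inner_on V z x0) = 0"
    proof (rule linear_coeff_eq_0_if_nonpos)
      fix t
      define x where "x = (\<lambda>v. x0 v + t * z v)"
      have "x \<in> bulk_space"
        unfolding x_def by (intro bulk_space_add bulk_space_scale x0 z)
      then have "\<sigma> * adj_form x x \<le> \<sigma> * \<mu> * inner_on V x x"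
        using max[of x] by (auto simp: \<sigma>_def \<mu>_def abs_le_iff)
      moreover have "adj_form x x = \<mu> + 2 * t * adj_form z x0 + t\<^sup>2 * adj_form z z"
        by (simp add: x_def \<mu>_def adj_form_commute[of x0 z] power2_eq_square algebra_simps)
      moreover have "inner_on V x x = 1 + 2 * t * inner_on V z x0 + t\<^sup>2 * inner_on V z z"
        using x0(2) by (simp add: x_def inner_on_commute[of V x0 z] power2_eq_square algebra_simps)
      ultimately show "\<sigma> * 2 * (adj_form z x0 - \<mu> * inner_on V z x0) * t
          + \<sigma> * (adj_form z z - \<mu> * inner_on V z z) * t\<^sup>2 \<le> 0"
        by (simp add: algebra_simps)
    qed
    then show ?thesis by (simp add: \<sigma>_def split: if_splits)
  qed
  define y where "y = (\<lambda>v. (if v \<in> V then adj_apply V E x0 v else 0) - \<mu> * x0 v)"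
  have "y \<in> bulk_space"
    unfolding y_def by (intro bulk_space_diff bulk_space_scale adj_apply_in_bulk_space x0)
  then have "inner_on V y y = 0"
    by (subst (2) y_def) (simp add: inner_on_adj_apply stationary)
  then have "\<forall>v\<in>V. y v = 0"
    using inner_on_self_eq_0[OF finite_V] by blast
  then have "\<forall>v\<in>V. adj_apply V E x0 v = \<mu> * x0 v"
    by (simp add: y_def)
  moreover have "\<exists>v\<in>V. x0 v \<noteq> 0"
  proof (rule ccontr)
    assume "\<not> (\<exists>v\<in>V. x0 v \<noteq> 0)"
    then have "inner_on V x0 x0 = 0" by (simp add: inner_on_def)
    with x0(2) show False by simp
  qed
  ultimately show ?thesis
    unfolding \<mu>_def bulk_eigenvalue_iff using x0(1) by blast
qed

lemma bulk_eigenvalue_has_unit_eigenvector: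
  assumes "bulk_eigenvalue V E k P \<mu>"
  obtains x where "inner_on V x x = 1" "\<forall>v\<in>V. adj_apply V E x v = \<mu> * x v"
proof -
  obtain y where y: "\<exists>v\<in>V. y v \<noteq> 0" "\<forall>v\<in>V. adj_apply V E y v = \<mu> * y v"
    using assms unfolding bulk_eigenvalue_iff by blast
  define c where "c = sqrt (inner_on V y y)"
  have "inner_on V y y \<noteq> 0"
    using y(1) inner_on_self_eq_0[OF finite_V] by blast
  then have "inner_on V (\<lambda>v. y v / c) (\<lambda>v. y v / c) = 1"
    unfolding c_def by (rule inner_on_self_normalize)
  moreover have "adj_apply V E (\<lambda>v. y v / c) u = adj_apply V E y u / c" for u
    by (simp add: adj_apply_def sum_divide_distrib if_distrib[of "\<lambda>a. a / c"] cong: if_cong)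
  then have "\<forall>v\<in>V. adj_apply V E (\<lambda>v. y v / c) v = \<mu> * (y v / c)"
    using y(2) by simp
  ultimately show ?thesis
    using that by blast
qed

lemma finite_bulk_eigenvalues: "finite {\<mu>. bulk_eigenvalue V E k P \<mu>}"
proof (rule ccontr)
  assume "infinite {\<mu>. bulk_eigenvalue V E k P \<mu>}"
  then obtain F where F: "F \<subseteq> {\<mu>. bulk_eigenvalue V E k P \<mu>}" "card F = Suc (card V)"
    using infinite_arbitrarily_large by blast
  have "\<exists>x. inner_on V x x = 1 \<and> (\<forall>v\<in>V. adj_apply V E x v = \<mu> * x v)" if \<mu>: "\<mu> \<in> F" for \<mu>
  proof -
    obtain x where "inner_on V x x = 1" "\<forall>v\<in>V. adj_apply V E x v = \<mu> * x v"
      by (rule bulk_eigenvalue_has_unit_eigenvector[of \<mu>]) (use F(1) \<mu> in auto)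
    then show ?thesis by blast
  qed
  then obtain e where e: "\<And>\<mu>. \<mu> \<in> F \<Longrightarrow> inner_on V (e \<mu>) (e \<mu>) = 1"
      "\<And>\<mu>. \<mu> \<in> F \<Longrightarrow> \<forall>v\<in>V. adj_apply V E (e \<mu>) v = \<mu> * e \<mu> v"
    by metis
  have "adj_form (e \<mu>) (e \<nu>) = \<nu> * inner_on V (e \<mu>) (e \<nu>)" if "\<nu> \<in> F" for \<mu> \<nu>
    using e that by (simp add: adj_form_def inner_on_def sum_distrib_left mult.left_commute)
  then have "\<mu> * inner_on V (e \<mu>) (e \<nu>) = \<nu> * inner_on V (e \<mu>) (e \<nu>)"
    if "\<mu> \<in> F" "\<nu> \<in> F" for \<mu> \<nu>
    using that adj_form_commute[of "e \<mu>"] inner_on_commute[of V "e \<mu>"] by metis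
  then have "inner_on V (e \<mu>) (e \<nu>) = of_bool (\<mu> = \<nu>)" if "\<mu> \<in> F" "\<nu> \<in> F" for \<mu> \<nu>
    using that e(1) by (cases "\<mu> = \<nu>") auto
  then have "card F \<le> card V"
    by (rule card_le_card_if_orthonormal[OF finite_V])
  with F(2) show False by simp
qed

lemma abs_adj_form_le_lambda_B:
  assumes "card V > k" "x \<in> bulk_space"
  shows "\<bar>adj_form x x\<bar> \<le> lambda_B V E k P * inner_on V x x"
proof -
  obtain x0 where x0: "x0 \<in> bulk_space" "inner_on V x0 x0 = 1"
    and max: "\<And>x. x \<in> bulk_space \<Longrightarrow> \<bar>adj_form x x\<bar> \<le> \<bar>adj_form x0 x0\<bar> * inner_on V x x"
    using exists_max_abs_rayleigh[OF assms(1)] by blast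
  have "finite {\<bar>\<mu>\<bar> | \<mu>. bulk_eigenvalue V E k P \<mu>}"
    using finite_image_set[OF finite_bulk_eigenvalues, of abs] .
  moreover have "\<bar>adj_form x0 x0\<bar> \<in> {\<bar>\<mu>\<bar> | \<mu>. bulk_eigenvalue V E k P \<mu>}"
    using bulk_eigenvalue_if_max_abs_rayleigh[OF x0 max] by blast
  ultimately have "\<bar>adj_form x0 x0\<bar> \<le> lambda_B V E k P"
    unfolding lambda_B_def by (rule Max_ge)
  then show ?thesis
    using max[OF assms(2)] inner_on_self_nonneg[of V x] by (meson mult_right_mono order_trans)
qed

lemma lambda_B_nonneg:
  assumes "card V > k"
  shows "lambda_B V E k P \<ge> 0"
proof -
  obtain x where "x \<in> bulk_space" "inner_on V x x = 1"
    using bulk_space_has_unit_vector[OF assms] .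
  then show ?thesis
    using abs_adj_form_le_lambda_B[OF assms] by (metis abs_ge_zero mult_1_right order_trans)
qed

lemma abs_adj_form_le:
  assumes bound: "\<And>x. x \<in> bulk_space \<Longrightarrow> \<bar>adj_form x x\<bar> \<le> L * inner_on V x x"
    and x: "x \<in> bulk_space" and y: "y \<in> bulk_space"
  shows "\<bar>adj_form x y\<bar> \<le> L * sqrt (inner_on V x x) * sqrt (inner_on V y y)"
proof (cases "inner_on V x x = 0 \<or> inner_on V y y = 0")
  case True
  then show ?thesis
    using adj_form_eq_0_if_inner_on_self_eq_0[of x y] adj_form_eq_0_if_inner_on_self_eq_0[of y x]
      adj_form_commute[of x y] by auto
next
  case False
  define a where "a = sqrt (inner_on V x x)"
  define b where "b = sqrt (inner_on V y y)"
  define x' where "x' = (\<lambda>v. x v / a)"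
  define y' where "y' = (\<lambda>v. y v / b)"
  have "a > 0" "b > 0"
    using False inner_on_self_nonneg[of V x] inner_on_self_nonneg[of V y]
    by (auto simp: a_def b_def)
  have x': "x' \<in> bulk_space" "inner_on V x' x' = 1"
    using bulk_space_divide[OF x] inner_on_self_normalize[of V x] False
    unfolding x'_def a_def by auto
  have y': "y' \<in> bulk_space" "inner_on V y' y' = 1"
    using bulk_space_divide[OF y] inner_on_self_normalize[of V y] False
    unfolding y'_def b_def by auto
  have bounds:
    "\<bar>adj_form (\<lambda>v. x' v + y' v) (\<lambda>v. x' v + y' v)\<bar> \<le> L * inner_on V (\<lambda>v. x' v + y' v) (\<lambda>v. x' v + y' v)"
    "\<bar>adj_form (\<lambda>v. x' v - y' v) (\<lambda>v. x' v - y' v)\<bar> \<le> L * inner_on V (\<lambda>v. x' v - y' v) (\<lambda>v. x' v - y' v)"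
    by (intro bound bulk_space_add bulk_space_diff x'(1) y'(1))+
  have expansions:
    "adj_form (\<lambda>v. x' v + y' v) (\<lambda>v. x' v + y' v)
      = adj_form x' x' + adj_form y' y' + 2 * adj_form x' y'"
    "adj_form (\<lambda>v. x' v - y' v) (\<lambda>v. x' v - y' v)
      = adj_form x' x' + adj_form y' y' - 2 * adj_form x' y'"
    "inner_on V (\<lambda>v. x' v + y' v) (\<lambda>v. x' v + y' v) = 2 + 2 * inner_on V x' y'"
    "inner_on V (\<lambda>v. x' v - y' v) (\<lambda>v. x' v - y' v) = 2 - 2 * inner_on V x' y'"
    using x'(2) y'(2) adj_form_commute[of y' x'] inner_on_commute[of V y' x'] by simp_all
  have "\<bar>adj_form x' y'\<bar> \<le> L"
    using bounds unfolding expansions distrib_left right_diff_distrib abs_le_iff by linarith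
  moreover have "adj_form x' y' = adj_form x y / (a * b)"
    by (simp add: x'_def y'_def)
  ultimately show ?thesis
    using \<open>a > 0\<close> \<open>b > 0\<close> by (simp add: abs_divide divide_le_eq a_def b_def mult.assoc)
qed

section \<open>Cell averages\<close>

definition cell_density :: "'a set \<Rightarrow> nat \<Rightarrow> real" where
  "cell_density A i = real (card (A \<inter> P i)) / real (card (P i))"

definition cell_average :: "'a set \<Rightarrow> 'a \<Rightarrow> real" where
  "cell_average A v = (\<Sum>i<k. if v \<in> P i then cell_density A i else 0)"

definition bulk_part :: "'a set \<Rightarrow> 'a \<Rightarrow> real" where
  "bulk_part A = (\<lambda>v. indicator A v - cell_average A v)"

lemma cell_average_eq_cell_density:
  assumes "j < k" "v \<in> P j"
  shows "cell_average A v = cell_density A j"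
proof -
  have "cell_average A v = (\<Sum>i<k. if i = j then cell_density A i else 0)"
    unfolding cell_average_def using cells_disjoint assms by (intro sum.cong) auto
  then show ?thesis using assms(1) by simp
qed

lemma cell_average_outside: "v \<notin> V \<Longrightarrow> cell_average A v = 0"
  unfolding cell_average_def using cell_subset by (intro sum.neutral) auto

lemma card_cell_mult_cell_density:
  "j < k \<Longrightarrow> real (card (P j)) * cell_density A j = real (card (A \<inter> P j))"
  using card_cell_pos[of j] by (simp add: cell_density_def)

lemma cell_density_bounds: "j < k \<Longrightarrow> 0 \<le> cell_density A j \<and> cell_density A j \<le> 1"
  using card_cell_pos[of j] card_mono[OF finite_cell[of j], of "A \<inter> P j"]
  by (auto simp: cell_density_def divide_le_eq_1)

lemma inner_on_cell_constant:
  assumes "\<And>j v. j < k \<Longrightarrow> v \<in> P j \<Longrightarrow> x v = a j"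
  shows "inner_on V x z = (\<Sum>j<k. a j * (\<Sum>v\<in>P j. z v))"
  unfolding inner_on_def sum_over_cells by (intro sum.cong refl) (simp add: assms sum_distrib_left)

lemma adj_form_cell_constant:
  assumes "\<And>j v. j < k \<Longrightarrow> v \<in> P j \<Longrightarrow> x v = a j"
  shows "adj_form x z = (\<Sum>i<k. a i * (\<Sum>j<k. real (S j i) * (\<Sum>v\<in>P j. z v)))"
  by (simp add: adj_form_def inner_on_cell_constant[OF assms] sum_adj_apply_cell)

lemma sum_cell_average: "j < k \<Longrightarrow> (\<Sum>v\<in>P j. cell_average A v) = real (card (A \<inter> P j))"
  by (simp add: cell_average_eq_cell_density card_cell_mult_cell_density)

lemma bulk_part_in_bulk_space: "A \<subseteq> V \<Longrightarrow> bulk_part A \<in> bulk_space"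
  by (auto simp: bulk_space_def bulk_part_def sum_subtractf sum_indicator_cell sum_cell_average
      cell_average_outside split: split_indicator)

lemma inner_on_cell_average_bulk: "z \<in> bulk_space \<Longrightarrow> inner_on V (cell_average A) z = 0"
  by (simp add: inner_on_cell_constant[OF cell_average_eq_cell_density] bulk_space_def)

lemma adj_form_cell_average_bulk: "z \<in> bulk_space \<Longrightarrow> adj_form (cell_average A) z = 0"
  by (simp add: adj_form_cell_constant[OF cell_average_eq_cell_density] bulk_space_def)

lemma inner_on_self_bulk_part:
  assumes "A \<subseteq> V"
  shows "inner_on V (bulk_part A) (bulk_part A)
    = (\<Sum>j<k. real (card (P j)) * (cell_density A j * (1 - cell_density A j)))"
proof -
  have "inner_on V (bulk_part A) (bulk_part A) = inner_on V (indicator A) (bulk_part A)"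
    using inner_on_cell_average_bulk[OF bulk_part_in_bulk_space[OF assms]]
    by (subst (1) bulk_part_def) simp
  also have "\<dots> = inner_on V (indicator A) (indicator A) - inner_on V (cell_average A) (indicator A)"
    by (simp add: bulk_part_def inner_on_commute[of V "indicator A" "cell_average A"])
  also have "\<dots> = (\<Sum>j<k. real (card (A \<inter> P j)) - cell_density A j * real (card (A \<inter> P j)))"
    using inner_on_cell_constant[OF cell_average_eq_cell_density, where z = "indicator A"]
    by (simp add: inner_on_def sum_over_cells indicator_inter_arith[symmetric] sum_indicator_cell
        sum_subtractf)
  also have "\<dots> = (\<Sum>j<k. real (card (P j)) * (cell_density A j * (1 - cell_density A j)))"
    by (intro sum.cong refl) (simp add: card_cell_mult_cell_density[symmetric] algebra_simps)
  finally show ?thesis .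
qed

lemma adj_apply_indicator: "adj_apply V E (indicator C) u = real (card {v \<in> C. E u v})"
proof -
  have "adj_apply V E (indicator C) u = (\<Sum>v\<in>V. of_bool (E u v \<and> v \<in> C))"
    unfolding adj_apply_def by (intro sum.cong) (auto simp: indicator_def)
  also have "\<dots> = real (card (V \<inter> {v. E u v \<and> v \<in> C}))"
    using finite_V by simp
  also have "V \<inter> {v. E u v \<and> v \<in> C} = {v \<in> C. E u v}"
    using edge_in_V by blast
  finally show ?thesis .
qed

lemma card_cell_mult_S_commute:
  assumes "i < k" "j < k"
  shows "card (P i) * S i j = card (P j) * S j i"
proof -
  have cap: "real (card (P j \<inter> P l)) = (if l = j then real (card (P j)) else 0)" if "l < k" for l
  proof -
    have "l \<noteq> j \<Longrightarrow> P j \<inter> P l = {}"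
      using cells_disjoint[OF that assms(2)] by blast
    then show ?thesis by auto
  qed
  have "real (card (P i) * S i j) = (\<Sum>u\<in>P i. adj_apply V E (indicator (P j)) u)"
    using assms by (simp add: adj_apply_indicator card_neighbours_in_cell)
  also have "\<dots> = real (S j i * card (P j))"
    using assms by (simp add: sum_adj_apply_cell sum_indicator_cell cap if_distrib cong: if_cong)
  finally show ?thesis by (simp only: of_nat_eq_iff mult.commute)
qed

lemma sqrt_S_coefficient:
  assumes "i < k" "j < k"
  shows "sqrt (real (S i j) * real (S j i) / (real (card (P i)) * real (card (P j))))
    = real (S j i) / real (card (P i))"
proof -
  have ni: "real (card (P i)) > 0" and nj: "real (card (P j)) > 0"
    using card_cell_pos assms by auto
  have double_count: "real (card (P i)) * real (S i j) = real (card (P j)) * real (S j i)"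
    using card_cell_mult_S_commute[OF assms] by (metis of_nat_mult)
  have "real (S i j) * real (S j i) * (real (card (P i)) * real (card (P i)))
      = (real (card (P i)) * real (S i j)) * (real (S j i) * real (card (P i)))"
    by (simp add: algebra_simps)
  also have "\<dots> = real (S j i) * real (S j i) * (real (card (P i)) * real (card (P j)))"
    by (simp add: double_count algebra_simps)
  finally have "real (S i j) * real (S j i) / (real (card (P i)) * real (card (P j)))
      = (real (S j i) / real (card (P i)))\<^sup>2"
    using ni nj by (simp add: field_simps power2_eq_square)
  then show ?thesis by simp
qed

lemma adj_form_cell_averages:
  "adj_form (cell_average B) (cell_average C)
    = (\<Sum>i<k. \<Sum>j<k. sqrt (real (S i j * S j i) / real (card (P i) * card (P j)))
        * real (card (B \<inter> P i)) * real (card (C \<inter> P j)))"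
proof -
  have "adj_form (cell_average B) (cell_average C)
      = (\<Sum>i<k. cell_density B i * (\<Sum>j<k. real (S j i) * (\<Sum>v\<in>P j. cell_average C v)))"
    by (rule adj_form_cell_constant) (rule cell_average_eq_cell_density)
  also have "\<dots> = (\<Sum>i<k. \<Sum>j<k. real (S j i) / real (card (P i))
      * real (card (B \<inter> P i)) * real (card (C \<inter> P j)))"
    by (simp add: sum_cell_average sum_distrib_left cell_density_def ac_simps)
  finally show ?thesis
    by (simp add: sqrt_S_coefficient)
qed

lemma edge_count_eq_adj_form: "real (edge_count E B C) = adj_form (indicator B) (indicator C)"
proof -
  have "{(u, v). u \<in> B \<and> v \<in> C \<and> E u v} = (SIGMA u:V \<inter> B. {v \<in> C. E u v})"
    using edge_in_V edge_sym by blast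
  moreover have "finite {v \<in> C. E u v}" for u
    using finite_V edge_in_V by (auto intro: finite_subset)
  ultimately have "edge_count E B C = (\<Sum>u\<in>V \<inter> B. card {v \<in> C. E u v})"
    unfolding edge_count_def using finite_V by simp
  then show ?thesis
    using finite_V by (simp add: adj_form_def inner_on_def adj_apply_indicator Int_def)
qed

lemma edge_count_minus_adj_form_cell_averages:
  assumes "B \<subseteq> V" "C \<subseteq> V"
  shows "real (edge_count E B C) - adj_form (cell_average B) (cell_average C)
    = adj_form (bulk_part B) (bulk_part C)"
proof -
  have decompose: "indicator A = (\<lambda>v. cell_average A v + bulk_part A v)" for A :: "'a set"
    by (simp add: bulk_part_def)
  have "real (edge_count E B C)
      = adj_form (\<lambda>v. cell_average B v + bulk_part B v) (\<lambda>v. cell_average C v + bulk_part C v)"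
    by (simp only: edge_count_eq_adj_form decompose)
  then show ?thesis
    using adj_form_cell_average_bulk[OF bulk_part_in_bulk_space[OF assms(1)], of C]
      adj_form_cell_average_bulk[OF bulk_part_in_bulk_space[OF assms(2)], of B]
    by (simp add: adj_form_commute[of "bulk_part B" "cell_average C"])
qed

lemma inner_on_self_bulk_part_le_card:
  assumes "A \<subseteq> V"
  shows "inner_on V (bulk_part A) (bulk_part A) \<le> real (card A)"
proof -
  have "inner_on V (bulk_part A) (bulk_part A) \<le> (\<Sum>j<k. real (card (P j)) * cell_density A j)"
    unfolding inner_on_self_bulk_part[OF assms] using cell_density_bounds
    by (intro sum_mono mult_left_mono mult_left_le) auto
  also have "\<dots> = (\<Sum>v\<in>V. indicator A v)"
    by (simp add: sum_over_cells sum_indicator_cell card_cell_mult_cell_density)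
  also have "\<dots> = real (card A)"
    using assms finite_V by (simp add: indicator_def Int_absorb1)
  finally show ?thesis .
qed

lemma inner_on_self_bulk_part_le:
  assumes "A \<subseteq> V"
  shows "inner_on V (bulk_part A) (bulk_part A)
    \<le> real (card V) * (\<Sum>j<k. cell_density A j * (1 - cell_density A j))"
  unfolding inner_on_self_bulk_part[OF assms] sum_distrib_left
  using cell_density_bounds card_mono[OF finite_V cell_subset]
  by (intro sum_mono mult_right_mono) auto

end

theorem mainTheorem9:
  fixes V :: "'a set" and E :: "'a \<Rightarrow> 'a \<Rightarrow> bool" and k :: nat
    and P :: "nat \<Rightarrow> 'a set" and S :: "nat \<Rightarrow> nat \<Rightarrow> nat" and B C :: "'a set"
  assumes "simple_graph V E" and "connected_graph V E"
    and "S_regular V E k P S"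
    and "card V > k"
    and "B \<subseteq> V" and "C \<subseteq> V"
  shows "\<bar>real (edge_count E B C)
           - (\<Sum>i<k. \<Sum>j<k. sqrt (real (S i j * S j i) / real (card (P i) * card (P j)))
                 * real (card (B \<inter> P i)) * real (card (C \<inter> P j)))\<bar>
         \<le> lambda_B V E k P * real (card V) *
            sqrt ((real (card B) / real (card V)) *
                  (\<Sum>i<k. (real (card (C \<inter> P i)) / real (card (P i))) *
                          (1 - real (card (C \<inter> P i)) / real (card (P i)))))"
proof -
  interpret S_regular_graph V E k P S
    using assms(1,3) by unfold_locales
  define L where "L = lambda_B V E k P"
  define n where "n = real (card V)"
  define \<Sigma> where "\<Sigma> = (\<Sum>i<k. cell_density C i * (1 - cell_density C i))"
  have "n > 0" "L \<ge> 0"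
    using assms(4) lambda_B_nonneg[OF assms(4)] by (auto simp: n_def L_def)
  have "\<bar>adj_form (bulk_part B) (bulk_part C)\<bar>
      \<le> L * sqrt (inner_on V (bulk_part B) (bulk_part B))
          * sqrt (inner_on V (bulk_part C) (bulk_part C))"
    unfolding L_def using abs_adj_form_le_lambda_B[OF assms(4)] bulk_part_in_bulk_space assms(5,6)
    by (intro abs_adj_form_le) auto
  also have "\<dots> \<le> L * sqrt (real (card B)) * sqrt (n * \<Sigma>)"
    using \<open>L \<ge> 0\<close> inner_on_self_bulk_part_le_card[OF assms(5)]
      inner_on_self_bulk_part_le[OF assms(6)]
    by (intro mult_mono mult_left_mono real_sqrt_le_mono)
      (auto simp: n_def \<Sigma>_def inner_on_self_nonneg)
  also have "\<dots> = L * n * sqrt (real (card B) / n * \<Sigma>)"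
    using \<open>n > 0\<close> real_sqrt_mult_self[of n]
    by (simp add: real_sqrt_mult real_sqrt_divide field_simps del: real_sqrt_mult_self)
  finally show ?thesis
    using edge_count_minus_adj_form_cell_averages[OF assms(5,6)]
    by (simp add: adj_form_cell_averages L_def n_def \<Sigma>_def cell_density_def)
qed

end
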